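(* Let $X$ be a real Banach lattice and $C\subseteq X$. If $\operatorname{so}(\overline{|C|})$ is norm closed, then $\overline{\operatorname{so}(C)}=\operatorname{so}(\overline{|C|})$, where $|C|=\{|x|:x\in C\}$ and bars denote norm closures.
   Context: $\operatorname{so}(S)$ is the set of all $z\in X$ for which there exists $x\in S$ with $|z|\le|x|$ (the smallest solid set containing $S$). *)

theory Defs
  imports "HOL-Analysis.Analysis"
begin

text \<open>A real Banach lattice: a type that is a real Banach space, an ordered real
vector space and a lattice (hence a Riesz space), whose norm is a lattice norm.\<close>

definition lat_abs :: "'a::{lattice, ab_group_add} \<Rightarrow> 'a" where
  "lat_abs x = sup x (- x)"

definition lattice_norm :: "'a::{banach, ordered_real_vector, lattice} itself \<Rightarrow> bool" where
  "lattice_norm _ \<longleftrightarrow> (\<forall>x y::'a. lat_abs x \<le> lat_abs y \<longrightarrow> norm x \<le> norm y)"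

definition solid_hull :: "'a::{lattice, ab_group_add} set \<Rightarrow> 'a set" where
  "solid_hull S = {z. \<exists>x\<in>S. lat_abs z \<le> lat_abs x}"

end

theory Submission
  imports Defs "HOL-Library.Lattice_Algebras"
begin

text \<open>The inclusion of the closure of \<open>so(C)\<close> in \<open>so(closure |C|)\<close> is immediate once the
latter is closed, since \<open>so(C) = so(|C|)\<close>. For the converse, fix \<open>z\<close> with \<open>|z| \<le> y\<close> for some
\<open>y\<close> in the closure of \<open>|C|\<close> and truncate with \<open>T a = (z \<sqinter> |a|) \<squnion> -|a|\<close>. Then \<open>|T a| \<le> |a|\<close>,
so \<open>T\<close> maps \<open>|C|\<close> into \<open>so(C)\<close>; lattice operations are nonexpansive, so \<open>T\<close> is
1-Lipschitz for a lattice norm and maps the closure of \<open>|C|\<close> into the closure of \<open>so(C)\<close>;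
and \<open>T y = z\<close>.\<close>

lemma sup_le_sup_add:
  fixes u v u' v' d :: "'a::{ordered_ab_group_add, lattice}"
  assumes "u \<le> u' + d" "v \<le> v' + d"
  shows "sup u v \<le> sup u' v' + d"
proof -
  have "u' + d \<le> sup u' v' + d" "v' + d \<le> sup u' v' + d" by (simp_all add: add_right_mono)
  with assms show ?thesis by (meson order.trans sup_least)
qed

lemma inf_le_inf_add:
  fixes u v u' v' d :: "'a::{ordered_ab_group_add, lattice}"
  assumes "u \<le> u' + d" "v \<le> v' + d"
  shows "inf u v \<le> inf u' v' + d"
proof -
  have "inf u v - d \<le> u'" "inf u v - d \<le> v'"
    using assms by (meson diff_le_eq order.trans inf_le1 inf_le2)+
  then have "inf u v - d \<le> inf u' v'" by (rule le_infI)
  then show ?thesis by (simp only: diff_le_eq)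
qed

lemma minus_le_minus_add:
  fixes u u' d :: "'a::{ordered_ab_group_add, lattice}"
  assumes "u' \<le> u + d"
  shows "- u \<le> - u' + d"
  using assms by (simp add: algebra_simps)

lemma lat_abs_le_iff:
  fixes x d :: "'a::{ordered_ab_group_add, lattice}"
  shows "lat_abs x \<le> d \<longleftrightarrow> x \<le> d \<and> - x \<le> d"
  by (simp add: lat_abs_def)

lemma lat_abs_nonneg:
  fixes x :: "'a::{ordered_ab_group_add, lattice}"
  shows "0 \<le> lat_abs x"
proof -
  \<comment> \<open>The sort intersection is not registered as class \<open>lattice_ab_group_add\<close>.\<close>
  interpret lattice_ab_group_add "(+)" "0::'a" "(-)" uminus "(\<le>)" "(<)" inf sup
    by unfold_locales
  have "x + - x \<le> lat_abs x + lat_abs x"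
    unfolding lat_abs_def by (intro add_mono) simp_all
  then show ?thesis by (simp add: zero_le_double_add_iff_zero_le_single_add)
qed

lemma lat_abs_idem:
  fixes x :: "'a::{ordered_ab_group_add, lattice}"
  shows "lat_abs (lat_abs x) = lat_abs x"
  using lat_abs_nonneg[of x] by (simp add: lat_abs_def[of "lat_abs x"] sup_absorb1 order.trans[of _ 0])

lemma lat_abs_le_add_lat_abs_diff:
  fixes a b :: "'a::{ordered_ab_group_add, lattice}"
  shows "lat_abs a \<le> lat_abs b + lat_abs (a - b)"
proof -
  have "b \<le> lat_abs b" "- b \<le> lat_abs b" "a - b \<le> lat_abs (a - b)" "b - a \<le> lat_abs (a - b)"
    by (simp_all add: lat_abs_def)
  then have "b + (a - b) \<le> lat_abs b + lat_abs (a - b)" "- b + (b - a) \<le> lat_abs b + lat_abs (a - b)"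
    by (blast intro: add_mono)+
  then show ?thesis by (simp add: lat_abs_le_iff)
qed

lemma lat_abs_diff_commute:
  fixes a b :: "'a::{ordered_ab_group_add, lattice}"
  shows "lat_abs (a - b) = lat_abs (b - a)"
  by (simp add: lat_abs_def sup_commute)

definition lat_trunc :: "'a::{ordered_ab_group_add, lattice} \<Rightarrow> 'a \<Rightarrow> 'a" where
  "lat_trunc z a = sup (inf z (lat_abs a)) (- lat_abs a)"

lemma lat_abs_lat_trunc_diff_le:
  fixes a b z :: "'a::{ordered_ab_group_add, lattice}"
  shows "lat_abs (lat_trunc z a - lat_trunc z b) \<le> lat_abs (a - b)"
proof -
  define d where "d = lat_abs (a - b)"
  have "z \<le> z + d" using lat_abs_nonneg[of "a - b"] by (simp add: d_def)
  moreover have "lat_abs a \<le> lat_abs b + d" "lat_abs b \<le> lat_abs a + d"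
    using lat_abs_le_add_lat_abs_diff[of a b] lat_abs_le_add_lat_abs_diff[of b a]
    by (simp_all add: d_def lat_abs_diff_commute[of b a])
  ultimately have "lat_trunc z a \<le> lat_trunc z b + d" "lat_trunc z b \<le> lat_trunc z a + d"
    unfolding lat_trunc_def
    by (blast intro: sup_le_sup_add inf_le_inf_add minus_le_minus_add)+
  then show ?thesis
    by (simp add: lat_abs_le_iff d_def[symmetric] algebra_simps)
qed

lemma lat_abs_lat_trunc_le:
  fixes a z :: "'a::{ordered_ab_group_add, lattice}"
  shows "lat_abs (lat_trunc z a) \<le> lat_abs a"
proof -
  have "- lat_abs a \<le> lat_abs a" using lat_abs_nonneg[of a] by (meson neg_le_0_iff_le order.trans)
  then have "lat_trunc z a \<le> lat_abs a" unfolding lat_trunc_def by (meson inf_le2 sup_least)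
  moreover have "- lat_abs a \<le> lat_trunc z a" unfolding lat_trunc_def by simp
  ultimately show ?thesis by (simp add: lat_abs_le_iff minus_le_iff)
qed

lemma lat_trunc_eq:
  fixes y z :: "'a::{ordered_ab_group_add, lattice}"
  assumes "lat_abs z \<le> lat_abs y"
  shows "lat_trunc z y = z"
proof -
  have "z \<le> lat_abs y" "- z \<le> lat_abs y" using assms by (simp_all add: lat_abs_le_iff)
  then show ?thesis by (simp add: lat_trunc_def inf_absorb1 sup_absorb1 minus_le_iff)
qed

lemma lipschitz_on_lat_trunc:
  fixes z :: "'a::{banach, ordered_real_vector, lattice}"
  assumes "lattice_norm TYPE('a)"
  shows "1-lipschitz_on S (lat_trunc z)"
proof (rule lipschitz_onI)
  fix a b
  show "dist (lat_trunc z a) (lat_trunc z b) \<le> 1 * dist a b"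
    using assms lat_abs_lat_trunc_diff_le[of z a b] by (simp add: lattice_norm_def dist_norm)
qed simp

lemma solid_hull_mono: "A \<subseteq> B \<Longrightarrow> solid_hull A \<subseteq> solid_hull B"
  unfolding solid_hull_def by blast

lemma solid_hull_lat_abs_image:
  fixes C :: "'a::{ordered_ab_group_add, lattice} set"
  shows "solid_hull (lat_abs ` C) = solid_hull C"
  unfolding solid_hull_def by (simp add: lat_abs_idem)

lemma lat_trunc_image_subset_solid_hull:
  fixes A :: "'a::{ordered_ab_group_add, lattice} set"
  shows "lat_trunc z ` A \<subseteq> solid_hull A"
proof
  fix b assume "b \<in> lat_trunc z ` A"
  then obtain a where "a \<in> A" "b = lat_trunc z a" by blast
  then show "b \<in> solid_hull A" using lat_abs_lat_trunc_le[of z a] by (auto simp: solid_hull_def)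
qed

lemma closure_solid_hull_subset:
  fixes C :: "'a::{ordered_ab_group_add, lattice, topological_space} set"
  assumes "closed (solid_hull (closure (lat_abs ` C)))"
  shows "closure (solid_hull C) \<subseteq> solid_hull (closure (lat_abs ` C))"
proof (rule closure_minimal[OF _ assms])
  show "solid_hull C \<subseteq> solid_hull (closure (lat_abs ` C))"
    using solid_hull_mono[OF closure_subset, of "lat_abs ` C"] by (simp add: solid_hull_lat_abs_image)
qed

lemma solid_hull_closure_subset:
  fixes C :: "'a::{banach, ordered_real_vector, lattice} set"
  assumes "lattice_norm TYPE('a)"
  shows "solid_hull (closure (lat_abs ` C)) \<subseteq> closure (solid_hull C)"
proof
  fix z assume "z \<in> solid_hull (closure (lat_abs ` C))"
  then obtain y where y: "y \<in> closure (lat_abs ` C)" "lat_abs z \<le> lat_abs y"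
    unfolding solid_hull_def by blast
  have "lat_trunc z ` lat_abs ` C \<subseteq> solid_hull C"
    using lat_trunc_image_subset_solid_hull[of z "lat_abs ` C"] by (simp only: solid_hull_lat_abs_image)
  then have "lat_trunc z ` closure (lat_abs ` C) \<subseteq> closure (solid_hull C)"
    using closure_subset
    by (intro image_closure_subset lipschitz_on_continuous_on[OF lipschitz_on_lat_trunc[OF assms]]) auto
  with y show "z \<in> closure (solid_hull C)" by (auto simp: lat_trunc_eq)
qed

theorem mainTheorem11:
  fixes C :: "'a::{banach, ordered_real_vector, lattice} set"
  assumes "lattice_norm TYPE('a)"
    and "closed (solid_hull (closure (lat_abs ` C)))"
  shows "closure (solid_hull C) = solid_hull (closure (lat_abs ` C))"
  using closure_solid_hull_subset[OF assms(2)] solid_hull_closure_subset[OF assms(1)]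
  by (rule antisym)

end
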